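(* Let $q$ be a power of the prime $p$, $n\ge 2$ and $1\le i\le n$. If $\alpha$ is a root of $s_{n,i}(t)$ in an algebraic closure of $\mathbb{F}_q$ whose multiplicity $m$ satisfies $\gcd(m,p)=1$, then $\alpha\in\mathbb{F}_{q^n}$.
   Context: For a prime power $q$ and integers $n\ge 1$, $0\le i\le n$, the $i$-th $(n,q)$-elementary symmetric polynomial is $s_{n,i}(t)=\sum_{0\le j_1<j_2<\dots<j_i\le n-1} t^{q^{j_1}+q^{j_2}+\dots+q^{j_i}}\in\mathbb{F}_p[t]$ (where $p$ is the characteristic of $\mathbb{F}_q$). By convention $s_{n,0}(t)=1$. *)

theory Defs
  imports "HOL-Computational_Algebra.Polynomial"
begin

text \<open>Its coefficients are 0/1 (integers), so it is defined over any commutative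
  ring with 1; over a field of characteristic p it is the image of the
  polynomial in F_p[t].\<close>

definition qsym :: "nat \<Rightarrow> nat \<Rightarrow> nat \<Rightarrow> 'a::comm_ring_1 poly" where
  "qsym q n i = (\<Sum>J \<in> {J. J \<subseteq> {0..<n} \<and> card J = i}. monom 1 (\<Sum>j\<in>J. q ^ j))"

end

theory Submission
  imports Defs "HOL-Computational_Algebra.Primes"
begin

(* Split the index sets J \<subseteq> {0..<n+1} of s = s_{n+1,i+1} by whether n \<in> J, and again by whether
   0 \<in> J.  Shifting J multiplies its exponent by q, which in characteristic p is the Frobenius
   q-th power, so
     s = s_{n,i+1} + t^(q^n) s_{n,i}   and   s = t s_{n,i}^q + s_{n,i+1}^q.
   Hence s' = s_{n,i}^q and s^q - s = (t^(q^(n+1)) - t) s', i.e. s divides (t^(q^(n+1)) - t) s'.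
   At a root \<alpha> of multiplicity m with p \<nmid> m the derivative vanishes to order exactly m - 1,
   so t - \<alpha> divides t^(q^(n+1)) - t. *)

definition qsym_on :: "nat \<Rightarrow> nat set \<Rightarrow> nat \<Rightarrow> 'a::comm_ring_1 poly" where
  "qsym_on q A i = (\<Sum>J \<in> {J. J \<subseteq> A \<and> card J = i}. monom 1 (\<Sum>j\<in>J. q ^ j))"

lemma qsym_eq_qsym_on: "qsym q n i = qsym_on q {0..<n} i"
  by (simp add: qsym_def qsym_on_def)

lemma finite_subsets_card: "finite A \<Longrightarrow> finite {J. J \<subseteq> A \<and> card J = i}"
  by (rule finite_subset[of _ "Pow A"]) auto

lemma subsets_card_Suc_insert:
  assumes "finite A" "a \<notin> A"
  shows "{J. J \<subseteq> insert a A \<and> card J = Suc i}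
           = {J. J \<subseteq> A \<and> card J = Suc i} \<union> insert a ` {J. J \<subseteq> A \<and> card J = i}"
proof (intro equalityI subsetI)
  fix J assume J: "J \<in> {J. J \<subseteq> insert a A \<and> card J = Suc i}"
  then have "finite J" using assms(1) by (auto dest: finite_subset)
  show "J \<in> {J. J \<subseteq> A \<and> card J = Suc i} \<union> insert a ` {J. J \<subseteq> A \<and> card J = i}"
  proof (cases "a \<in> J")
    case True
    then have "J = insert a (J - {a})" "J - {a} \<in> {J. J \<subseteq> A \<and> card J = i}"
      using J \<open>finite J\<close> by auto
    then show ?thesis by blast
  qed (use J in auto)
next
  fix J assume "J \<in> {J. J \<subseteq> A \<and> card J = Suc i} \<union> insert a ` {J. J \<subseteq> A \<and> card J = i}"
  then show "J \<in> {J. J \<subseteq> insert a A \<and> card J = Suc i}"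
  proof
    assume "J \<in> insert a ` {J. J \<subseteq> A \<and> card J = i}"
    then obtain K where K: "K \<subseteq> A" "card K = i" "J = insert a K" by blast
    then have "finite K" "a \<notin> K" using assms finite_subset by auto
    then show ?thesis using K by auto
  qed auto
qed

lemma subsets_card_image:
  assumes "inj_on f A"
  shows "{J. J \<subseteq> f ` A \<and> card J = i} = image f ` {J. J \<subseteq> A \<and> card J = i}"
proof (intro equalityI subsetI)
  fix J assume "J \<in> {J. J \<subseteq> f ` A \<and> card J = i}"
  then obtain K where "K \<subseteq> A" "J = f ` K" "card J = i"
    by (auto simp: subset_image_iff)
  moreover have "card (f ` K) = card K"
    using \<open>K \<subseteq> A\<close> assms by (meson card_image inj_on_subset)
  ultimately show "J \<in> image f ` {J. J \<subseteq> A \<and> card J = i}" by auto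
next
  fix J assume "J \<in> image f ` {J. J \<subseteq> A \<and> card J = i}"
  then show "J \<in> {J. J \<subseteq> f ` A \<and> card J = i}"
    using assms by (auto simp: card_image inj_on_subset)
qed

lemma qsym_on_0: "qsym_on q A 0 = 1" if "finite A"
proof -
  have "{J. J \<subseteq> A \<and> card J = 0} = {{}}"
    using that by (auto dest: finite_subset)
  then show ?thesis by (simp add: qsym_on_def)
qed

lemma qsym_on_insert:
  assumes "finite A" "a \<notin> A"
  shows "qsym_on q (insert a A) (Suc i) = qsym_on q A (Suc i) + monom 1 (q ^ a) * qsym_on q A i"
proof -
  let ?B = "{J. J \<subseteq> A \<and> card J = i}"
  have "inj_on (insert a) ?B"
    using assms(2) by (intro inj_onI) (metis Diff_insert_absorb in_mono mem_Collect_eq)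
  moreover have "monom 1 (\<Sum>j\<in>insert a J. q ^ j) = monom 1 (q ^ a) * (monom 1 (\<Sum>j\<in>J. q ^ j) :: 'a poly)"
    if "J \<in> ?B" for J
  proof -
    have "finite J" "a \<notin> J" using that assms finite_subset by auto
    then show ?thesis by (simp add: mult_monom)
  qed
  ultimately show ?thesis
    using assms unfolding qsym_on_def subsets_card_Suc_insert[OF assms]
    by (subst sum.union_disjoint)
       (auto simp: finite_subsets_card sum.reindex sum_distrib_left)
qed

lemma qsym_on_image_Suc:
  assumes "prime CHAR('a::comm_ring_1)" "q = CHAR('a) ^ k"
  shows "(qsym_on q (Suc ` A) i :: 'a poly) = qsym_on q A i ^ q"
proof -
  have "inj_on (image Suc) {J. J \<subseteq> A \<and> card J = i}"
    by (rule inj_on_subset[OF inj_on_image_Pow[of Suc UNIV]]) auto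
  then have "(qsym_on q (Suc ` A) i :: 'a poly)
               = (\<Sum>J \<in> {J. J \<subseteq> A \<and> card J = i}. monom 1 ((\<Sum>j\<in>J. q ^ j) * q))"
    unfolding qsym_on_def subsets_card_image[OF inj_Suc[THEN inj_on_subset], OF subset_UNIV]
    by (simp add: sum.reindex inj_on_subset[OF inj_Suc] sum_distrib_left mult.commute)
  also have "\<dots> = qsym_on q A i ^ q"
    using assms unfolding qsym_on_def
    by (simp add: freshmans_dream_sum' monom_power)
  finally show ?thesis .
qed

lemma qsym_0: "qsym q n 0 = 1"
  by (simp add: qsym_eq_qsym_on qsym_on_0)

lemma qsym_Suc_Suc: "qsym q (Suc n) (Suc i) = qsym q n (Suc i) + monom 1 (q ^ n) * qsym q n i"
  by (simp add: qsym_eq_qsym_on atLeast0_lessThan_Suc qsym_on_insert)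

lemma qsym_Suc_Suc_frobenius:
  assumes "prime CHAR('a::comm_ring_1)" "q = CHAR('a) ^ k"
  shows "(qsym q (Suc n) (Suc i) :: 'a poly) = qsym q n (Suc i) ^ q + monom 1 1 * qsym q n i ^ q"
proof -
  have "(qsym_on q (insert 0 (Suc ` {0..<n})) (Suc i) :: 'a poly)
          = qsym_on q (Suc ` {0..<n}) (Suc i) + monom 1 (q ^ 0) * qsym_on q (Suc ` {0..<n}) i"
    by (rule qsym_on_insert) auto
  then show ?thesis
    unfolding qsym_eq_qsym_on atLeast0_lessThan_Suc_eq_insert_0 qsym_on_image_Suc[OF assms]
    by simp
qed

lemma qsym_pderiv:
  assumes "prime CHAR('a::idom)" "q = CHAR('a) ^ k" "k \<ge> 1"
  shows "pderiv (qsym q (Suc n) (Suc i) :: 'a poly) = qsym q n i ^ q"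
proof -
  have "(of_nat q :: 'a) = 0"
    using assms(2,3) by (simp add: of_nat_eq_0_iff_char_dvd)
  then have "pderiv (f ^ q) = 0" for f :: "'a poly"
    by (simp add: pderiv_power)
  then show ?thesis
    by (simp add: qsym_Suc_Suc_frobenius[OF assms(1,2)] pderiv_add pderiv_mult pderiv_monom)
qed

lemma qsym_power_minus_self:
  assumes "prime CHAR('a::idom)" "q = CHAR('a) ^ k" "k \<ge> 1"
  shows "(qsym q (Suc n) (Suc i) :: 'a poly) ^ q - qsym q (Suc n) (Suc i)
           = (monom 1 (q ^ Suc n) - monom 1 1) * pderiv (qsym q (Suc n) (Suc i))"
proof -
  have "(x + y) ^ q = x ^ q + y ^ q" for x y :: "'a poly"
    by (rule freshmans_dream') (simp_all add: assms(1,2))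
  moreover have "monom (1::'a) (q ^ n) ^ q = monom 1 (q ^ Suc n)"
    by (simp add: monom_power mult.commute)
  ultimately have "(qsym q (Suc n) (Suc i) :: 'a poly) ^ q
                     = qsym q n (Suc i) ^ q + monom 1 (q ^ Suc n) * qsym q n i ^ q"
    by (simp add: qsym_Suc_Suc power_mult_distrib)
  then show ?thesis
    unfolding qsym_pderiv[OF assms]
    by (subst (2) qsym_Suc_Suc_frobenius[OF assms(1,2)]) (simp add: algebra_simps)
qed

lemma qsym_nonzero:
  assumes "prime CHAR('a::field)" "q = CHAR('a) ^ k" "k \<ge> 1" "i \<le> n"
  shows "(qsym q n i :: 'a poly) \<noteq> 0"
  using assms(4)
proof (induction i arbitrary: n)
  case (Suc i)
  then obtain n' where "n = Suc n'" "i \<le> n'"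
    by (cases n) auto
  then have "pderiv (qsym q n (Suc i) :: 'a poly) \<noteq> 0"
    using Suc.IH assms(1-3) by (simp add: qsym_pderiv)
  then show ?case by auto
qed (simp add: qsym_0)

lemma poly_eq_0_if_dvd_mult_pderiv:
  fixes f g :: "'a::field poly"
  assumes "f \<noteq> 0" "poly f a = 0" "of_nat (order a f) \<noteq> (0::'a)" "f dvd g * pderiv f"
  shows "poly g a = 0"
proof -
  define L where "L = [:-a, 1:]"
  obtain m where m: "order a f = Suc m"
    using assms(1,2) order_root by (metis not0_implies_Suc)
  obtain h where f: "f = L ^ Suc m * h" and "\<not> L dvd h"
    using order_decomp[OF assms(1), of a] unfolding L_def m by blast
  then have "poly h a \<noteq> 0"
    by (simp add: L_def poly_eq_0_iff_dvd)
  have "pderiv (L ^ Suc m) = smult (of_nat (Suc m)) (L ^ m)"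
    by (simp only: pderiv_power_Suc L_def pderiv_pCons) simp
  then have "pderiv f = L ^ m * (smult (of_nat (Suc m)) h + L * pderiv h)"
    unfolding f pderiv_mult by (simp add: algebra_simps)
  then have "L ^ m * (L * h) dvd L ^ m * (g * (smult (of_nat (Suc m)) h + L * pderiv h))"
    using assms(4) f by (simp add: ac_simps)
  then have "L dvd g * (smult (of_nat (Suc m)) h + L * pderiv h)"
    by (auto simp: L_def intro: dvd_mult_left)
  then have "poly (g * (smult (of_nat (Suc m)) h + L * pderiv h)) a = 0"
    unfolding L_def poly_eq_0_iff_dvd .
  then have "poly g a * (of_nat (Suc m) * poly h a) = 0"
    by (simp add: L_def)
  then show ?thesis
    using assms(3) \<open>poly h a \<noteq> 0\<close> m by simp
qed

theorem lemma3p8: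
  fixes p q k n i m :: nat and \<alpha> :: "'a::alg_closed_field"
  assumes "prime p"
    and "CHAR('a) = p"
    and "k \<ge> 1" and "q = p ^ k"
    and "n \<ge> 2" and "1 \<le> i" and "i \<le> n"
    and "poly (qsym q n i) \<alpha> = 0"
    and "m = order \<alpha> (qsym q n i)"
    and "coprime m p"
  shows "\<alpha> ^ (q ^ n) = \<alpha>"
proof -
  have char: "prime CHAR('a)" "q = CHAR('a) ^ k" using assms(1,2,4) by auto
  obtain n' where n: "n = Suc n'"
    using assms(5) by (cases n) auto
  obtain i' where i: "i = Suc i'"
    using assms(6) by (cases i) auto
  define S where "S = (qsym q n i :: 'a poly)"
  have "S \<noteq> 0"
    unfolding S_def using qsym_nonzero[OF char assms(3,7)] .
  have "\<not> p dvd m"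
    using assms(1,10) coprime_common_divisor[of m p p] not_prime_unit by auto
  then have "(of_nat m :: 'a) \<noteq> 0"
    using assms(2) by (simp add: of_nat_eq_0_iff_char_dvd)
  obtain r where "q = Suc r"
    using assms(1,4) by (metis gr0_implies_Suc prime_gt_0_nat zero_less_power)
  then have "S dvd S ^ q - S"
    by (simp add: right_diff_distrib)
  then have "S dvd (monom 1 (q ^ n) - monom 1 1) * pderiv S"
    unfolding S_def n i qsym_power_minus_self[OF char assms(3)] .
  then have "poly (monom 1 (q ^ n) - monom 1 1) \<alpha> = 0"
    using poly_eq_0_if_dvd_mult_pderiv \<open>S \<noteq> 0\<close> \<open>of_nat m \<noteq> 0\<close> assms(8,9) S_def by blast
  then show ?thesis
    by (simp add: poly_monom)
qed

end
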